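(* Let $f:(0,\infty)\to(0,\infty)$ be a function which is constant on the interval $(0,4)$ and such that, for some positive real number $K$, $f(x)=K\left(\frac{x}{2}-1\right)f\left(\frac{x}{2}-1\right)$ for all $x\ge4$. Then there exists a positive real number $c$ such that $f(x)>x^{\log_2(x)/2-c}$ for every sufficiently large real number $x$. *)

theory Defs
  imports "HOL-Analysis.Analysis"
begin

end

theory Submission
  imports Defs
begin

text \<open>The recurrence sends \<open>x\<close> to \<open>x/2 - 1\<close>, which lowers \<open>T = log 2 (x + 2)\<close> by exactly one,
  so unwinding it from \<open>x\<close> down to \<open>(0, 4)\<close> takes about \<open>T\<close> steps. The factor picked up at
  level \<open>T\<close> is \<open>K (x/2 - 1) \<ge> K 2\<^sup>T / 6\<close>, so the product of these factors is at least
  \<open>2 powr (T\<^sup>2/2 - c T - d)\<close> with \<open>c\<close> depending only on \<open>K\<close>. Since \<open>T = log 2 x + o(1)\<close>, this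
  exceeds \<open>x powr (log 2 x / 2 - (c + 1))\<close> for large \<open>x\<close>.\<close>

lemma halving_induct [consumes 1, case_names base step]:
  fixes P :: "real \<Rightarrow> bool"
  assumes "0 < x"
    and base: "\<And>x. 0 < x \<Longrightarrow> x < 4 \<Longrightarrow> P x"
    and step: "\<And>x. 4 \<le> x \<Longrightarrow> P (x / 2 - 1) \<Longrightarrow> P x"
  shows "P x"
proof -
  have "\<forall>x. 0 < x \<and> x < 2 ^ n \<longrightarrow> P x" for n :: nat
  proof (induction n)
    case 0
    then show ?case using base by simp
  next
    case (Suc n)
    show ?case
    proof (intro allI impI)
      fix x :: real
      assume x: "0 < x \<and> x < 2 ^ Suc n"
      show "P x"
      proof (cases "x < 4")
        case True
        with base x show ?thesis by blast
      next
        case False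
        with x have "0 < x / 2 - 1 \<and> x / 2 - 1 < 2 ^ n" by auto
        with Suc.IH have "P (x / 2 - 1)" by blast
        with False step show ?thesis by simp
      qed
    qed
  qed
  moreover obtain n where "x < 2 ^ n"
    using real_arch_pow[of 2 x] by auto
  ultimately show ?thesis using \<open>0 < x\<close> by blast
qed

lemma halving_recurrence_lower_bound:
  fixes f :: "real \<Rightarrow> real" and a K c x :: real
  assumes initial: "\<And>x. 0 < x \<Longrightarrow> x < 4 \<Longrightarrow> a \<le> f x"
    and rec: "\<And>x. 4 \<le> x \<Longrightarrow> f x = K * (x / 2 - 1) * f (x / 2 - 1)"
    and "0 \<le> a" "0 \<le> c" "2 powr (- c) \<le> K / 6"
    and "0 < x"
  shows "a * 2 powr ((log 2 (x + 2))\<^sup>2 / 2 - c * log 2 (x + 2) - 5) \<le> f x"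
  using \<open>0 < x\<close>
proof (induction x rule: halving_induct)
  case (base x)
  define T where "T = log 2 (x + 2)"
  have "0 < T" "T < 3"
    using base by (simp_all add: T_def log_less_iff)
  then have "T\<^sup>2 < 3\<^sup>2"
    by (intro power_strict_mono) auto
  moreover have "0 \<le> c * T"
    using \<open>0 \<le> c\<close> \<open>0 < T\<close> by simp
  \<comment> \<open>The constant \<open>5 \<ge> 3\<^sup>2/2\<close> absorbs this initial range.\<close>
  ultimately have "T\<^sup>2 / 2 - c * T - 5 \<le> 0"
    by simp
  then have "2 powr (T\<^sup>2 / 2 - c * T - 5) \<le> 1"
    using powr_mono[of _ 0 2] by fastforce
  with \<open>0 \<le> a\<close> initial[OF base] show ?case
    unfolding T_def by (meson mult_left_le order_trans)
next
  case (step x)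
  define T where "T = log 2 (x + 2)"
  define Q where "Q t = t\<^sup>2 / 2 - c * t - 5" for t
  define y where "y = x / 2 - 1"
  have "1 \<le> y" using step.hyps by (simp add: y_def)
  have "log 2 (y + 2) = log 2 ((x + 2) / 2)"
    unfolding y_def by (rule arg_cong[where f = "log 2"]) simp
  also have "\<dots> = T - 1"
    using step.hyps by (subst log_divide_pos) (auto simp: T_def)
  finally have "log 2 (y + 2) = T - 1" .
  with step.IH \<open>1 \<le> y\<close> have IH: "a * 2 powr Q (T - 1) \<le> f y"
    by (simp add: Q_def y_def)
  have "0 < K"
    using \<open>2 powr (- c) \<le> K / 6\<close> powr_gt_zero[of 2 "- c"] by linarith
  have "y \<ge> 2 powr T / 6"
    using step.hyps by (simp add: y_def T_def)
  have "2 powr (T - 1/2 - c) \<le> 2 powr T * 2 powr (- c)"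
    by (simp add: powr_add[symmetric])
  also have "\<dots> \<le> 2 powr T * (K / 6)"
    using \<open>2 powr (- c) \<le> K / 6\<close> by (intro mult_left_mono) auto
  also have "\<dots> \<le> K * y"
    using \<open>y \<ge> 2 powr T / 6\<close> \<open>0 < K\<close> by (simp add: mult.commute)
  finally have factor: "2 powr (T - 1/2 - c) \<le> K * y" .
  have "Q T = Q (T - 1) + (T - 1/2 - c)"
    by (simp add: Q_def power2_eq_square field_simps)
  then have "a * 2 powr Q T = a * 2 powr Q (T - 1) * 2 powr (T - 1/2 - c)"
    by (simp add: powr_add)
  also have "\<dots> \<le> a * 2 powr Q (T - 1) * (K * y)"
    using factor \<open>0 \<le> a\<close> by (intro mult_left_mono) auto
  also have "\<dots> \<le> f y * (K * y)"
    using IH factor by (intro mult_right_mono) (auto intro: order_trans[OF powr_ge_zero])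
  also have "\<dots> = f x"
    using rec[OF step.hyps] by (simp add: y_def)
  finally show ?case by (simp add: Q_def T_def)
qed

lemma powr_log_square_eventually_less:
  fixes a c d :: real
  assumes "0 < a" "0 \<le> c"
  shows "\<forall>\<^sub>F x in at_top.
    x powr (log 2 x / 2 - (c + 1)) < a * 2 powr ((log 2 (x + 2))\<^sup>2 / 2 - c * log 2 (x + 2) - d)"
  using eventually_ge_at_top[of 2] eventually_gt_at_top[of "2 powr (c + d - log 2 a)"]
proof eventually_elim
  case (elim x)
  define L where "L = log 2 x"
  define T where "T = log 2 (x + 2)"
  have "1 \<le> L" "L \<le> T"
    using elim by (simp_all add: L_def T_def)
  have "T \<le> log 2 (2 * x)"
    using elim by (simp add: T_def)
  also have "\<dots> = L + 1"
    using elim by (simp add: L_def log_mult)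
  finally have "T \<le> L + 1" .
  have "c + d - log 2 a < L"
    using elim log_less[of 2 "2 powr (c + d - log 2 a)" x] by (simp add: L_def)
  moreover have "L\<^sup>2 \<le> T\<^sup>2"
    using \<open>1 \<le> L\<close> \<open>L \<le> T\<close> by (intro power_mono) auto
  moreover have "c * T \<le> c * (L + 1)"
    using \<open>0 \<le> c\<close> \<open>T \<le> L + 1\<close> by (intro mult_left_mono)
  ultimately have exponent: "L * (L / 2 - (c + 1)) < log 2 a + (T\<^sup>2 / 2 - c * T - d)"
    by (simp add: power2_eq_square algebra_simps)
  have "x powr (log 2 x / 2 - (c + 1)) = 2 powr (L * (L / 2 - (c + 1)))"
    using elim by (simp add: L_def powr_powr[symmetric])
  also have "\<dots> < 2 powr (log 2 a + (T\<^sup>2 / 2 - c * T - d))"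
    using exponent by simp
  also have "\<dots> = a * 2 powr (T\<^sup>2 / 2 - c * T - d)"
    using \<open>0 < a\<close> by (simp add: powr_add)
  finally show ?case by (simp add: T_def)
qed

theorem lemma8p6:
  fixes f :: "real \<Rightarrow> real" and K :: real
  assumes pos: "\<forall>x>0. f x > 0"
    and const: "\<exists>a. \<forall>x\<in>{0<..<4}. f x = a"
    and K_pos: "K > 0"
    and rec: "\<forall>x\<ge>4. f x = K * (x / 2 - 1) * f (x / 2 - 1)"
  shows "\<exists>c>0. \<forall>\<^sub>F x in at_top. f x > x powr (log 2 x / 2 - c)"
proof -
  obtain a where a: "\<forall>x\<in>{0<..<4}. f x = a"
    using const by blast
  have "0 < a"
    using pos[rule_format, of 1] a[rule_format, of 1] by simp
  define c where "c = max 0 (log 2 (6 / K))"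
  have "0 \<le> c"
    by (simp add: c_def)
  have "2 powr (- c) \<le> 2 powr (- log 2 (6 / K))"
    by (simp add: c_def)
  also have "\<dots> = K / 6"
    using K_pos by (simp add: powr_minus_divide)
  finally have "2 powr (- c) \<le> K / 6" .
  with a rec \<open>0 < a\<close> \<open>0 \<le> c\<close>
  have lower: "a * 2 powr ((log 2 (x + 2))\<^sup>2 / 2 - c * log 2 (x + 2) - 5) \<le> f x"
    if "0 < x" for x
    by (intro halving_recurrence_lower_bound[OF _ _ _ _ _ that]) auto
  have "\<forall>\<^sub>F x in at_top. f x > x powr (log 2 x / 2 - (c + 1))"
    using powr_log_square_eventually_less[OF \<open>0 < a\<close> \<open>0 \<le> c\<close>, of 5] eventually_gt_at_top[of 0]
    by eventually_elim (use lower in fastforce)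
  with \<open>0 \<le> c\<close> show ?thesis
    by (intro exI[of _ "c + 1"]) auto
qed

end
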